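(* Let $R$ be a tolerance relation on $\{1,\ldots,n\}$ and $A=A(R)$. For $x\in M_n(\mathbb{C})$ let $\varphi_x:M_n(\mathbb{C})\to\mathbb{C}$, $\varphi_x(a):=\mathrm{Tr}(x^*a)$. Then the map $(A,\succeq)\to(A^*,\geq)$ sending $x\in A$ to $\varphi_x|_A$ is an isomorphism of ordered vector spaces (i.e. an isomorphism of the underlying real vector spaces such that $x\succeq 0$ if and only if $\varphi_x|_A\ge 0$).
   Context: A tolerance relation on a set $X$ is a reflexive and symmetric relation. $T:M_n(\mathbb{C})\to M_n(\mathbb{C})$ is $T(b)=\sum_{(i,j)\in R}E_{ii}bE_{jj}$ (setting entries in positions $(i,j)\notin R$ to zero) and $A(R)=T(M_n(\mathbb{C}))$, the matrices vanishing outside $R$. For $a\in A(R)$, $a\succeq 0$ means $a=T(b)$ for some positive semidefinite $b\in M_n(\mathbb{C})$. $A^*$ is the dual space of $A$, ordered by: $\varphi\ge0$ iff $\varphi(a)\ge 0$ for every positive semidefinite matrix $a\in A$. *)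

theory Defs
  imports "HOL-Analysis.Analysis"
begin

text \<open>Matrices in M_n(C) are modelled as complex^'n^'n, the index type 'n
  being an arbitrary finite type with CARD('n) = n.\<close>

definition tolerance :: "('n \<times> 'n) set \<Rightarrow> bool" where
  "tolerance R \<longleftrightarrow> (\<forall>i. (i, i) \<in> R) \<and> (\<forall>i j. (i, j) \<in> R \<longrightarrow> (j, i) \<in> R)"

definition matunit :: "'n::finite \<Rightarrow> 'n \<Rightarrow> complex^'n^'n" where
  "matunit i j = (\<chi> k l. if k = i \<and> l = j then 1 else 0)"

definition adj :: "complex^'n^'n \<Rightarrow> complex^'n^'n" where
  "adj x = (\<chi> i j. cnj (x $ j $ i))"

definition psd :: "complex^'n^'n \<Rightarrow> bool" where
  "psd b \<longleftrightarrow> adj b = b \<and>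
     (\<forall>v :: complex^'n. Im (\<Sum>i\<in>UNIV. cnj (v $ i) * (b *v v) $ i) = 0
                    \<and> 0 \<le> Re (\<Sum>i\<in>UNIV. cnj (v $ i) * (b *v v) $ i))"

definition Tmap :: "('n::finite \<times> 'n) set \<Rightarrow> complex^'n^'n \<Rightarrow> complex^'n^'n" where
  "Tmap R b = (\<Sum>(i, j)\<in>R. matunit i i ** b ** matunit j j)"

definition Aspace :: "('n::finite \<times> 'n) set \<Rightarrow> (complex^'n^'n) set" where
  "Aspace R = range (Tmap R)"

definition Apos :: "('n::finite \<times> 'n) set \<Rightarrow> complex^'n^'n \<Rightarrow> bool" where
  "Apos R a \<longleftrightarrow> (\<exists>b. psd b \<and> a = Tmap R b)"

definition phi :: "complex^'n^'n \<Rightarrow> complex^'n^'n \<Rightarrow> complex" where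
  "phi x a = trace (adj x ** a)"

definition dual_space :: "(complex^'n^'n) set \<Rightarrow> (complex^'n^'n \<Rightarrow> complex) set" where
  "dual_space A = {f \<in> extensional A.
     (\<forall>a\<in>A. \<forall>b\<in>A. f (a + b) = f a + f b) \<and> (\<forall>c. \<forall>a\<in>A. f (\<chi> i j. c * a $ i $ j) = c * f a)}"

definition dual_nonneg :: "(complex^'n^'n) set \<Rightarrow> (complex^'n^'n \<Rightarrow> complex) \<Rightarrow> bool" where
  "dual_nonneg A f \<longleftrightarrow> (\<forall>a\<in>A. psd a \<longrightarrow> Im (f a) = 0 \<and> 0 \<le> Re (f a))"

end

theory Submission
  imports Defs "HOL-Library.Complex_Order"
begin

text \<open>Re phi_x(a) is the real Frobenius inner product x \<bullet> a, so x \<mapsto> phi_x|A is injective on A,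
  and evaluating a functional on the matrix units E_kl, (k, l) \<in> R, shows that it is onto A*.

  If x = T(b) with b psd, then phi_x(a) = Tr(b* a) for every a \<in> A, and Tr(b* a) \<ge> 0 for psd a
  because b is a sum of rank-one matrices u u* (Cholesky) and Tr(u u* a) = u* a u.
  Conversely let phi_x \<ge> 0.  Testing phi_x on the rank-one psd matrices lying in A shows that
  x is Hermitian.  The cone T(PSD) contains the convex cone C generated by the T(v v*) with
  |v| = 1, and C is closed because the trace is 1 on these generators.  If x were not in C,
  a separating functional a would give the Hermitian part h of T(a), an element of A which is
  psd since v* h v = a \<bullet> T(v v*) \<ge> 0; but then 0 \<le> Re phi_x(h) = a \<bullet> x < 0.\<close>

section \<open>Separating a point from a closed convex cone\<close>

lemma closed_convex_cone_separation:
  fixes C :: "'a::euclidean_space set"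
  assumes "convex_cone C" "closed C" "x \<notin> C"
  obtains a where "a \<bullet> x < 0" "\<And>c. c \<in> C \<Longrightarrow> 0 \<le> a \<bullet> c"
proof -
  obtain a \<beta> where ax: "a \<bullet> x < \<beta>" and aC: "\<And>c. c \<in> C \<Longrightarrow> \<beta> < a \<bullet> c"
    using separating_hyperplane_closed_point[of C x] assms by (auto simp: convex_cone_def)
  have "\<beta> < 0"
    using aC[of 0] convex_cone_contains_0[OF assms(1)] by simp
  have nonneg: "0 \<le> a \<bullet> c" if "c \<in> C" for c
  proof (rule ccontr)
    assume "\<not> 0 \<le> a \<bullet> c"
    then have "0 \<le> \<beta> / (a \<bullet> c)" and "a \<bullet> ((\<beta> / (a \<bullet> c)) *\<^sub>R c) = \<beta>"
      using \<open>\<beta> < 0\<close> by (simp_all add: divide_nonpos_neg)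
    moreover have "(\<beta> / (a \<bullet> c)) *\<^sub>R c \<in> C"
      using assms(1) that calculation(1) by (simp add: convex_cone_iff)
    ultimately show False
      using aC by fastforce
  qed
  show thesis
    using that[OF _ nonneg] ax \<open>\<beta> < 0\<close> by simp
qed

lemma adj_eq_iff: "adj b = b \<longleftrightarrow> (\<forall>k l. cnj (b$l$k) = b$k$l)"
  by (auto simp: adj_def vec_eq_iff)

lemma adj_adj [simp]: "adj (adj b) = b"
  by (simp add: adj_def vec_eq_iff)

lemma adj_add: "adj (b + c) = adj b + adj c"
  by (simp add: adj_def vec_eq_iff)

lemma adj_diff: "adj (b - c) = adj b - adj c"
  by (simp add: adj_def vec_eq_iff)

lemma adj_scaleR: "adj (r *\<^sub>R b) = r *\<^sub>R adj b"
  by (simp add: adj_def vec_eq_iff)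

lemma inner_adj: "adj b \<bullet> c = b \<bullet> adj c"
proof -
  have "adj b \<bullet> c = (\<Sum>k\<in>UNIV. \<Sum>l\<in>UNIV. Re (b$l$k * c$k$l))"
    by (simp add: adj_def inner_vec_def inner_complex_def)
  also have "\<dots> = (\<Sum>l\<in>UNIV. \<Sum>k\<in>UNIV. Re (b$l$k * c$k$l))"
    by (rule sum.swap)
  also have "\<dots> = b \<bullet> adj c"
    by (simp add: adj_def inner_vec_def inner_complex_def mult.commute)
  finally show ?thesis .
qed

definition hermitian_part :: "complex^'n^'n \<Rightarrow> complex^'n^'n" where
  "hermitian_part M = (1/2) *\<^sub>R (M + adj M)"

lemma adj_hermitian_part: "adj (hermitian_part M) = hermitian_part M"
  by (simp add: hermitian_part_def adj_scaleR adj_add add.commute)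

lemma inner_hermitian_part: "adj G = G \<Longrightarrow> hermitian_part M \<bullet> G = M \<bullet> G"
  by (simp add: hermitian_part_def inner_add_left inner_adj)

lemma phi_eq_sum: "phi x a = (\<Sum>k\<in>UNIV. \<Sum>l\<in>UNIV. cnj (x$k$l) * a$k$l)"
  unfolding phi_def trace_def adj_def matrix_matrix_mult_def
  by (simp, rule sum.swap)

lemma Re_phi: "Re (phi x a) = x \<bullet> a"
  by (simp add: phi_eq_sum inner_vec_def inner_complex_def)

lemma phi_add_left: "phi (x + y) a = phi x a + phi y a"
  by (simp add: phi_eq_sum distrib_right sum.distrib)

lemma phi_scaleR_left: "phi (r *\<^sub>R x) a = r *\<^sub>R phi x a"
  by (simp add: phi_eq_sum scaleR_conv_of_real[where 'a=complex] sum_distrib_left ac_simps)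

lemma phi_sum_left: "phi (\<Sum>r\<in>S. x r) a = (\<Sum>r\<in>S. phi (x r) a)"
  by (induction S rule: infinite_finite_induct) (simp_all add: phi_eq_sum distrib_right sum.distrib)

lemma phi_add_right: "phi x (a + b) = phi x a + phi x b"
  by (simp add: phi_eq_sum distrib_left sum.distrib)

lemma phi_cmult_right: "phi x (\<chi> i j. c * a$i$j) = c * phi x a"
  by (simp add: phi_eq_sum sum_distrib_left ac_simps)

section \<open>The compression T and the space A(R)\<close>

lemma matunit_mult_mult:
  "matunit i i ** b ** matunit j j = (\<chi> k l. if k = i \<and> l = j then b$i$j else 0)"
proof -
  have left: "matunit i i ** b = (\<chi> k m. if k = i then b$i$m else 0)"
    by (simp add: matunit_def matrix_matrix_mult_def vec_eq_iff if_distrib[where f="\<lambda>x. x * _"]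
        sum.delta cong: if_cong)
  have right: "c ** matunit j j = (\<chi> k l. if l = j then c$k$j else 0)" for c :: "complex^_^_"
    by (simp add: matunit_def matrix_matrix_mult_def vec_eq_iff if_distrib[where f="\<lambda>x. _ * x"]
        sum.delta' cong: if_cong)
  show ?thesis
    unfolding left right by (simp add: vec_eq_iff)
qed

lemma Tmap_eq: "Tmap R b = (\<chi> k l. if (k, l) \<in> R then b$k$l else 0)"
proof -
  have "(\<Sum>p\<in>R. if k = fst p \<and> l = snd p then b $ fst p $ snd p else 0)
      = (\<Sum>p\<in>R. if p = (k, l) then b$k$l else 0)" for k l
    by (rule sum.cong) auto
  then show ?thesis
    by (simp add: Tmap_def matunit_mult_mult vec_eq_iff sum_component case_prod_unfold
        sum.delta'[OF finite])
qed

lemma Aspace_eq: "Aspace R = {a. \<forall>k l. (k, l) \<notin> R \<longrightarrow> a$k$l = 0}"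
proof -
  have "a = Tmap R a" if "\<forall>k l. (k, l) \<notin> R \<longrightarrow> a$k$l = 0" for a
    using that by (auto simp: Tmap_eq vec_eq_iff)
  then show ?thesis
    by (auto simp: Aspace_def Tmap_eq)
qed

lemma Tmap_fixes_Aspace: "a \<in> Aspace R \<Longrightarrow> Tmap R a = a"
  by (auto simp: Aspace_eq Tmap_eq vec_eq_iff)

lemma subspace_Aspace: "subspace (Aspace R)"
  by (simp add: subspace_def Aspace_eq)

lemma cmult_in_Aspace: "a \<in> Aspace R \<Longrightarrow> (\<chi> i j. c * a$i$j) \<in> Aspace R"
  by (simp add: Aspace_eq)

lemma adj_in_Aspace: "sym R \<Longrightarrow> a \<in> Aspace R \<Longrightarrow> adj a \<in> Aspace R"
  by (auto simp: Aspace_eq adj_def dest: symD)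

lemma Tmap_scaleR: "Tmap R (r *\<^sub>R b) = r *\<^sub>R Tmap R b"
  by (simp add: Tmap_eq vec_eq_iff)

lemma linear_Tmap: "linear (Tmap R)"
  by (rule linearI) (simp_all add: Tmap_eq vec_eq_iff)

lemma inner_Tmap: "a \<bullet> Tmap R b = Tmap R a \<bullet> b"
  by (simp add: inner_vec_def Tmap_eq if_distrib[where f="\<lambda>x. _ \<bullet> x"] cong: if_cong)
     (intro sum.cong refl, auto)

lemma phi_Tmap_left: "phi (Tmap R b) a = phi b (Tmap R a)"
  by (simp add: phi_eq_sum Tmap_eq if_distrib[where f=cnj] if_distrib[where f="\<lambda>x. x * _"]
      if_distrib[where f="\<lambda>x. _ * x"] cong: if_cong)

lemma complex_nonneg_iff: "0 \<le> z \<longleftrightarrow> Im z = 0 \<and> 0 \<le> Re z"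
  by (auto simp: less_eq_complex_def)

definition qform :: "complex^'n^'n \<Rightarrow> complex^'n \<Rightarrow> complex" where
  "qform b v = (\<Sum>k\<in>UNIV. \<Sum>l\<in>UNIV. cnj (v$k) * b$k$l * v$l)"

definition outer :: "complex^'n \<Rightarrow> complex^'n^'n" where
  "outer v = (\<chi> k l. v$k * cnj (v$l))"

lemma psd_iff_qform: "psd b \<longleftrightarrow> adj b = b \<and> (\<forall>v. 0 \<le> qform b v)"
  by (simp add: psd_def qform_def complex_nonneg_iff matrix_vector_mult_def sum_distrib_left
      mult.assoc)

lemma cnj_qform: "cnj (qform b v) = qform (adj b) v"
  unfolding qform_def adj_def by (simp add: ac_simps) (rule sum.swap)

lemma Im_qform_eq_0: "adj b = b \<Longrightarrow> Im (qform b v) = 0"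
  using cnj_qform[of b v] by (metis Reals_cnj_iff complex_is_Real_iff)

lemma psd_iff_Re_qform: "psd b \<longleftrightarrow> adj b = b \<and> (\<forall>v. 0 \<le> Re (qform b v))"
  by (auto simp: psd_iff_qform complex_nonneg_iff Im_qform_eq_0)

lemma qform_add: "qform (b + c) v = qform b v + qform c v"
  by (simp add: qform_def algebra_simps sum.distrib)

lemma qform_diff: "qform (b - c) v = qform b v - qform c v"
  by (simp add: qform_def algebra_simps sum_subtractf)

lemma qform_scaleR: "qform (r *\<^sub>R b) v = of_real r * qform b v"
  by (simp add: qform_def scaleR_conv_of_real[where 'a=complex] sum_distrib_left ac_simps)

lemma convex_cone_psd: "convex_cone {b. psd b}"
proof -
  have "psd 0"
    by (simp add: psd_iff_qform adj_def qform_def vec_eq_iff)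
  moreover have "psd (b + c)" if "psd b" "psd c" for b c
    using that by (simp add: psd_iff_qform adj_add qform_add)
  moreover have "psd (r *\<^sub>R b)" if "psd b" "0 \<le> r" for b r
    using that by (simp add: psd_iff_qform adj_scaleR qform_scaleR complex_nonneg_iff)
  ultimately show ?thesis
    unfolding convex_cone_iff by blast
qed

lemma phi_outer_left: "phi (outer u) a = qform a u"
  by (simp add: phi_eq_sum qform_def outer_def ac_simps)

lemma phi_outer_right: "phi x (outer v) = cnj (qform x v)"
  by (simp add: phi_eq_sum qform_def outer_def ac_simps)

lemma Re_qform: "Re (qform b v) = b \<bullet> outer v"
  by (metis Re_phi complex_cnj_cnj phi_outer_right cnj.sel(1))

lemma qform_outer: "qform (outer u) v = of_real ((cmod (\<Sum>k\<in>UNIV. cnj (v$k) * u$k))\<^sup>2)"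
  unfolding complex_norm_square qform_def outer_def
  by (simp add: sum_product cnj_sum ac_simps)

lemma outer_zero: "outer 0 = 0"
  by (simp add: outer_def vec_eq_iff)

lemma adj_outer: "adj (outer v) = outer v"
  by (simp add: adj_def outer_def vec_eq_iff)

lemma psd_outer: "psd (outer v)"
  by (simp add: psd_iff_qform adj_outer qform_outer complex_nonneg_iff)

lemma outer_scaleR: "outer (r *\<^sub>R v) = r\<^sup>2 *\<^sub>R outer v"
  by (simp add: outer_def vec_eq_iff scaleR_conv_of_real[where 'a=complex] power2_eq_square)

lemma outer_in_Aspace: "(\<And>k l. w$k \<noteq> 0 \<Longrightarrow> w$l \<noteq> 0 \<Longrightarrow> (k, l) \<in> R) \<Longrightarrow> outer w \<in> Aspace R"
  by (auto simp: Aspace_eq outer_def)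

section \<open>Positive semidefinite matrices are sums of rank-one matrices\<close>

lemma qform_add_axis:
  "qform b (v + axis i t) = qform b v + t * (\<Sum>k\<in>UNIV. cnj (v$k) * b$k$i)
     + cnj t * (\<Sum>l\<in>UNIV. b$i$l * v$l) + cnj t * t * b$i$i"
proof -
  have if_out: "(\<Sum>l\<in>UNIV. if P then f l else 0) = (if P then sum f UNIV else 0)"
    for P and f :: "'n \<Rightarrow> complex"
    by simp
  have "qform b (v + axis i t) = qform b v
    + (\<Sum>k\<in>UNIV. \<Sum>l\<in>UNIV. cnj (v$k) * b$k$l * axis i t $ l)
     + (\<Sum>k\<in>UNIV. \<Sum>l\<in>UNIV. cnj (axis i t $ k) * b$k$l * v$l)
     + (\<Sum>k\<in>UNIV. \<Sum>l\<in>UNIV. cnj (axis i t $ k) * b$k$l * axis i t $ l)"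
    by (simp add: qform_def algebra_simps sum.distrib)
  then show ?thesis
    by (simp add: if_out axis_def if_distrib[where f=cnj] if_distrib[where f="\<lambda>x. x * _"]
        if_distrib[where f="\<lambda>x. _ * x"] sum.delta sum_distrib_left ac_simps cong: if_cong)
qed

lemma qform_axis: "qform b (axis i t) = cnj t * t * b$i$i"
  using qform_add_axis[of b 0 i t] by (simp add: qform_def)

lemma psd_diag_nonneg: "psd b \<Longrightarrow> 0 \<le> b$i$i"
  using qform_axis[of b i 1] by (metis psd_iff_qform complex_cnj_one mult_1)

lemma psd_row_eq_zero:
  assumes "psd b" "b$i$i = 0"
  shows "b$i$k = 0"
proof (rule ccontr)
  define p where "p = b$i$k"
  assume "b$i$k \<noteq> 0"
  then have p: "0 < (cmod p)\<^sup>2" by (simp add: p_def)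
  have herm: "b$k$i = cnj p" using assms(1) by (simp add: psd_iff_qform adj_eq_iff p_def)
  define s where "s = (Re (b$k$k) + 1) / (2 * (cmod p)\<^sup>2)"
  define t where "t = - of_real s * p"
  have "0 \<le> Re (qform b (axis k 1 + axis i t))"
    using assms(1) by (simp add: psd_iff_qform complex_nonneg_iff)
  also have "qform b (axis k 1 + axis i t) = b$k$k + t * cnj p + cnj t * p"
    unfolding qform_add_axis qform_axis
    by (simp add: assms(2) herm p_def axis_def if_distrib[where f=cnj]
        if_distrib[where f="\<lambda>x. x * _"] if_distrib[where f="\<lambda>x. _ * x"] cong: if_cong)
  also have "t * cnj p = cnj t * p"
    by (simp add: t_def)
  also have "cnj t * p = - of_real s * (p * cnj p)"
    by (simp add: t_def)
  also have "p * cnj p = of_real ((cmod p)\<^sup>2)"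
    by (simp only: complex_norm_square)
  finally have "0 \<le> Re (b$k$k) - 2 * s * (cmod p)\<^sup>2"
    by simp
  also have "\<dots> = -1"
    using p by (simp add: s_def field_simps)
  finally show False by simp
qed

text \<open>For d = b_ii > 0 take u = b e_i / sqrt d: the quadratic form of b - u u* at v is that of b at
  v - ((b v)_i / d) e_i.  For d = 0 the i-th row of b vanishes, and u = 0 (division by zero in HOL).\<close>

lemma psd_schur_complement:
  assumes "psd b"
  obtains u where "psd (b - outer u)" "\<And>k. (b - outer u)$i$k = 0" "\<And>k. b$k$i = 0 \<Longrightarrow> u$k = 0"
proof -
  define d where "d = Re (b$i$i)"
  have bii: "b$i$i = of_real d" and "0 \<le> d"
    using psd_diag_nonneg[OF assms, of i] by (simp_all add: d_def complex_nonneg_iff complex_eq_iff)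
  have herm: "cnj (b$l$k) = b$k$l" for k l
    using assms by (simp add: psd_iff_qform adj_eq_iff)
  show thesis
  proof (cases "d = 0")
    case True
    show thesis
    proof (rule that[of 0])
      show "psd (b - outer 0)" using assms by (simp add: outer_zero)
      show "(b - outer 0)$i$k = 0" for k
        using psd_row_eq_zero[OF assms, of i k] bii True by (simp add: outer_zero)
    qed (simp add: outer_zero)
  next
    case False
    with \<open>0 \<le> d\<close> have "0 < d" by simp
    define u where "u = (\<chi> k. b$k$i / of_real (sqrt d))"
    have sqrt_d: "of_real (sqrt d) * of_real (sqrt d) = (of_real d :: complex)"
      using \<open>0 \<le> d\<close> by (simp flip: of_real_mult)
    have row: "(b - outer u)$i$k = 0" for k
      using \<open>0 < d\<close> by (simp add: u_def outer_def herm bii sqrt_d flip: times_divide_times_eq)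
    have "0 \<le> qform (b - outer u) v" for v
    proof -
      define p where "p = (\<Sum>l\<in>UNIV. b$i$l * v$l)"
      define t where "t = - p / of_real d"
      have cnj_p: "(\<Sum>k\<in>UNIV. cnj (v$k) * b$k$i) = cnj p"
        by (simp add: p_def cnj_sum herm mult.commute)
      have "qform (outer u) v = of_real ((cmod (cnj p / of_real (sqrt d)))\<^sup>2)"
        by (simp add: qform_outer u_def cnj_p flip: sum_divide_distrib)
      also have "\<dots> = p * cnj p / of_real d"
        using \<open>0 \<le> d\<close> by (simp add: norm_divide power_divide flip: complex_norm_square)
      finally have "qform (b - outer u) v = qform b v - p * cnj p / of_real d"
        by (simp add: qform_diff)
      also have "\<dots> = qform b (v + axis i t)"
        using \<open>0 < d\<close> by (simp add: qform_add_axis cnj_p bii p_def t_def field_simps)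
      finally show ?thesis
        using assms by (simp add: psd_iff_qform)
    qed
    moreover have "adj (b - outer u) = b - outer u"
      using assms by (simp add: adj_diff adj_outer psd_iff_qform)
    ultimately show thesis
      using that[of u] row by (simp add: psd_iff_qform u_def)
  qed
qed

lemma psd_eq_sum_outer_on:
  assumes "finite S" "psd b" "\<And>k l. k \<notin> S \<Longrightarrow> b$k$l = 0"
  shows "\<exists>U. b = (\<Sum>r\<in>S. outer (U r))"
  using assms
proof (induction S arbitrary: b rule: finite_induct)
  case empty
  then show ?case by (simp add: vec_eq_iff)
next
  case (insert i S)
  obtain u where psd: "psd (b - outer u)" and row: "\<And>k. (b - outer u)$i$k = 0"
    and supp: "\<And>k. b$k$i = 0 \<Longrightarrow> u$k = 0"
    using psd_schur_complement[OF insert.prems(1)] by metis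
  have clear: "(b - outer u)$k$l = 0" if "k \<notin> S" for k l
  proof (cases "k = i")
    case False
    with that have "b$k$l = 0" "u$k = 0"
      using insert.prems(2) supp by auto
    then show ?thesis by (simp add: outer_def)
  qed (use row in simp)
  obtain U where U: "b - outer u = (\<Sum>r\<in>S. outer (U r))"
    using insert.IH[OF psd clear] by blast
  have "(\<Sum>r\<in>S. outer ((U(i := u)) r)) = (\<Sum>r\<in>S. outer (U r))"
    using insert.hyps(2) by (intro sum.cong) auto
  moreover have "b = outer u + (\<Sum>r\<in>S. outer (U r))"
    using U by (simp add: diff_eq_eq add.commute)
  ultimately have "b = (\<Sum>r\<in>insert i S. outer ((U(i := u)) r))"
    using insert.hyps by simp
  then show ?case by blast
qed

lemma psd_eq_sum_outer:
  fixes b :: "complex^'n::finite^'n"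
  assumes "psd b"
  obtains U :: "'n \<Rightarrow> complex^'n" where "b = (\<Sum>r\<in>UNIV. outer (U r))"
  using psd_eq_sum_outer_on[OF finite assms] by blast

lemma phi_psd_nonneg:
  fixes a b :: "complex^'n::finite^'n"
  assumes "psd a" "psd b"
  shows "0 \<le> phi b a"
proof -
  obtain U :: "'n \<Rightarrow> complex^'n" where "b = (\<Sum>r\<in>UNIV. outer (U r))"
    using psd_eq_sum_outer[OF assms(2)] .
  then have "phi b a = (\<Sum>r\<in>UNIV. qform a (U r))"
    by (simp add: phi_sum_left phi_outer_left)
  then show ?thesis
    using assms(1) by (simp add: psd_iff_qform sum_nonneg)
qed

section \<open>The dual space of A(R)\<close>

lemma dual_space_sum:
  assumes "f \<in> dual_space A" "subspace A" "\<And>p. p \<in> F \<Longrightarrow> g p \<in> A"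
  shows "f (\<Sum>p\<in>F. g p) = (\<Sum>p\<in>F. f (g p))"
proof -
  have add: "f (a + b) = f a + f b" if "a \<in> A" "b \<in> A" for a b
    using assms(1) that by (simp add: dual_space_def)
  have "f 0 = 0"
    using add[of 0 0] assms(2) by (simp add: subspace_0)
  then show ?thesis
    using assms(3)
  proof (induction F rule: infinite_finite_induct)
    case (insert p F)
    then show ?case
      using add assms(2) by (simp add: subspace_sum)
  qed simp_all
qed

lemma dual_space_eq_sum_matunit:
  assumes "f \<in> dual_space (Aspace R)" "a \<in> Aspace R"
  shows "f a = (\<Sum>(k, l)\<in>R. a$k$l * f (matunit k l))"
proof -
  define e where "e p = (\<chi> i j. a $ fst p $ snd p * matunit (fst p) (snd p) $ i $ j)" for p
  have e_in: "e p \<in> Aspace R" if "p \<in> R" for p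
    using that by (auto simp: e_def Aspace_eq matunit_def)
  have "(\<Sum>p\<in>R. e p) $ k $ l = a $ k $ l" for k l
  proof -
    have "(\<Sum>p\<in>R. e p) $ k $ l = (\<Sum>p\<in>R. if p = (k, l) then a$k$l else 0)"
      unfolding e_def matunit_def sum_component by (rule sum.cong) auto
    also have "\<dots> = a $ k $ l"
      using assms(2) by (auto simp: Aspace_eq sum.delta'[OF finite])
    finally show ?thesis .
  qed
  then have "a = (\<Sum>p\<in>R. e p)"
    by (simp add: vec_eq_iff)
  then have "f a = f (\<Sum>p\<in>R. e p)"
    by simp
  also have "\<dots> = (\<Sum>p\<in>R. f (e p))"
    using dual_space_sum[OF assms(1) subspace_Aspace e_in] .
  also have "\<dots> = (\<Sum>(k, l)\<in>R. a$k$l * f (matunit k l))"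
  proof (rule sum.cong)
    fix p assume "p \<in> R"
    then have "matunit (fst p) (snd p) \<in> Aspace R"
      by (auto simp: Aspace_eq matunit_def)
    then show "f (e p) = (case p of (k, l) \<Rightarrow> a$k$l * f (matunit k l))"
      using assms(1) by (simp add: dual_space_def e_def case_prod_unfold)
  qed simp
  finally show ?thesis .
qed

lemma dual_space_eq_phi:
  assumes "f \<in> dual_space (Aspace R)"
  obtains x where "x \<in> Aspace R" "restrict (phi x) (Aspace R) = f"
proof
  define x where "x = (\<chi> k l. if (k, l) \<in> R then cnj (f (matunit k l)) else 0)"
  show "x \<in> Aspace R"
    by (simp add: Aspace_eq x_def)
  have "phi x a = f a" if "a \<in> Aspace R" for a
  proof -
    have "phi x a = (\<Sum>(k, l)\<in>UNIV. cnj (x$k$l) * a$k$l)"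
      unfolding phi_eq_sum sum.cartesian_product UNIV_Times_UNIV ..
    also have "\<dots> = (\<Sum>(k, l)\<in>R. cnj (x$k$l) * a$k$l)"
      by (rule sum.mono_neutral_right) (auto simp: x_def)
    also have "\<dots> = (\<Sum>(k, l)\<in>R. a$k$l * f (matunit k l))"
      by (rule sum.cong) (auto simp: x_def)
    finally show ?thesis
      using dual_space_eq_sum_matunit[OF assms that] by simp
  qed
  then show "restrict (phi x) (Aspace R) = f"
    using assms by (auto simp: dual_space_def extensional_def)
qed

lemma bij_betw_phi_dual_space:
  "bij_betw (\<lambda>x. restrict (phi x) (Aspace R)) (Aspace R) (dual_space (Aspace R))"
proof (rule bij_betw_imageI)
  show "inj_on (\<lambda>x. restrict (phi x) (Aspace R)) (Aspace R)"
  proof (rule inj_onI)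
    fix x y assume "x \<in> Aspace R" "y \<in> Aspace R"
      and eq: "restrict (phi x) (Aspace R) = restrict (phi y) (Aspace R)"
    then have "x - y \<in> Aspace R"
      by (simp add: subspace_diff[OF subspace_Aspace])
    then have "phi x (x - y) = phi y (x - y)"
      using fun_cong[OF eq, of "x - y"] by simp
    then have "x \<bullet> (x - y) = y \<bullet> (x - y)"
      by (simp flip: Re_phi)
    then have "(x - y) \<bullet> (x - y) = 0"
      by (simp add: inner_diff_left)
    then show "x = y" by simp
  qed
  show "(\<lambda>x. restrict (phi x) (Aspace R)) ` Aspace R = dual_space (Aspace R)"
  proof
    show "(\<lambda>x. restrict (phi x) (Aspace R)) ` Aspace R \<subseteq> dual_space (Aspace R)"
      by (auto simp: dual_space_def phi_add_right phi_cmult_right cmult_in_Aspace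
          subspace_add[OF subspace_Aspace])
    show "dual_space (Aspace R) \<subseteq> (\<lambda>x. restrict (phi x) (Aspace R)) ` Aspace R"
    proof
      fix f assume "f \<in> dual_space (Aspace R)"
      then obtain x where "x \<in> Aspace R" "restrict (phi x) (Aspace R) = f"
        by (rule dual_space_eq_phi)
      then show "f \<in> (\<lambda>x. restrict (phi x) (Aspace R)) ` Aspace R"
        by blast
    qed
  qed
qed

section \<open>Positivity in the dual space\<close>

lemma dual_nonneg_imp_adj_eq:
  assumes "tolerance R" "x \<in> Aspace R" "dual_nonneg (Aspace R) (restrict (phi x) (Aspace R))"
  shows "adj x = x"
proof -
  have refl: "(k, k) \<in> R" and sym: "(k, l) \<in> R \<Longrightarrow> (l, k) \<in> R" for k l
    using assms(1) by (auto simp: tolerance_def)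
  have real: "Im (qform x w) = 0" if "outer w \<in> Aspace R" for w
    using assms(3) that psd_outer[of w]
    by (auto simp: dual_nonneg_def phi_outer_right)
  have diag: "Im (x$k$k) = 0" for k
  proof -
    have "outer (axis k 1) \<in> Aspace R"
      by (rule outer_in_Aspace) (auto simp: axis_def refl split: if_splits)
    then show ?thesis
      using real[of "axis k 1"] by (simp add: qform_axis)
  qed
  have "cnj (x$j$i) = x$i$j" for i j
  proof (cases "(i, j) \<in> R \<and> i \<noteq> j")
    \<comment> \<open>the rank-one matrices (e_i + t e_j)(e_i + t e_j)* lie in A(R); take t = 1 and t = \<i>\<close>
    case True
    have "outer (axis i 1 + axis j t) \<in> Aspace R" for t
      by (rule outer_in_Aspace) (use True refl sym in \<open>auto simp: axis_def split: if_splits\<close>)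
    then have "Im (qform x (axis i 1 + axis j t)) = 0" for t
      by (rule real)
    moreover have expand: "qform x (axis i 1 + axis j t)
        = x$i$i + t * x$i$j + cnj t * x$j$i + cnj t * t * x$j$j" for t
      unfolding qform_add_axis qform_axis
      by (simp add: axis_def if_distrib[where f=cnj] if_distrib[where f="\<lambda>x. x * _"]
          if_distrib[where f="\<lambda>x. _ * x"] cong: if_cong)
    ultimately have "Im (qform x (axis i 1 + axis j 1)) = 0"
      and "Im (qform x (axis i 1 + axis j \<i>)) = 0"
      by blast+
    then show ?thesis
      using diag[of i] diag[of j] by (simp add: expand complex_eq_iff)
  next
    case False
    then consider "i = j" | "(i, j) \<notin> R" "(j, i) \<notin> R"
      using sym by blast
    then show ?thesis
    proof cases
      case 1
      then show ?thesis using diag[of i] by (simp add: complex_eq_iff)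
    next
      case 2
      then show ?thesis using assms(2) by (simp add: Aspace_eq)
    qed
  qed
  then show ?thesis
    by (simp add: adj_eq_iff)
qed

lemma Tmap_outer_continuous: "continuous_on S (\<lambda>v. Tmap R (outer v))"
proof (rule continuous_on_compose2[of UNIV "Tmap R"])
  show "continuous_on UNIV (Tmap R)"
    using linear_continuous_on linear_conv_bounded_linear linear_Tmap by blast
  show "continuous_on S outer"
    unfolding outer_def by (intro continuous_intros)
qed simp

lemma inner_mat_1: "mat 1 \<bullet> M = (\<Sum>k\<in>UNIV. Re (M$k$k))"
  by (simp add: inner_vec_def mat_def if_distrib[where f="\<lambda>x. x \<bullet> _"] cong: if_cong)

lemma inner_mat_1_Tmap_outer:
  assumes "\<And>k. (k, k) \<in> R"
  shows "mat 1 \<bullet> Tmap R (outer v) = (norm v)\<^sup>2"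
  unfolding inner_mat_1
  by (simp add: Tmap_eq outer_def assms power2_norm_eq_inner inner_vec_def inner_complex_def)

lemma closed_convex_cone_hull_Tmap_outer:
  fixes R :: "('n::finite \<times> 'n) set"
  assumes "\<And>k. (k, k) \<in> R"
  shows "closed (convex_cone hull ((\<lambda>v. Tmap R (outer v)) ` sphere 0 1))"
proof -
  let ?K = "(\<lambda>v. Tmap R (outer v)) ` sphere (0 :: complex^'n) 1"
  have "compact (convex hull ?K)"
    by (intro compact_convex_hull compact_continuous_image Tmap_outer_continuous compact_sphere)
  moreover have "convex hull ?K \<subseteq> {M. mat 1 \<bullet> M = 1}" \<comment> \<open>so 0 is not in it\<close>
    by (rule hull_minimal) (auto simp: inner_mat_1_Tmap_outer assms convex_hyperplane)
  ultimately have "closed (conic hull (convex hull ?K))"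
    by (intro closed_conic_hull_strong) auto
  moreover have "?K \<noteq> {}"
    by simp
  ultimately show ?thesis
    by (simp add: convex_cone_hull_separate_nonempty)
qed

lemma Tmap_outer_in_convex_cone_hull:
  "Tmap R (outer v) \<in> convex_cone hull ((\<lambda>v. Tmap R (outer v)) ` sphere 0 1)"
proof (cases "v = 0")
  case True
  then have "Tmap R (outer v) = 0"
    by (simp add: outer_zero linear_0[OF linear_Tmap])
  then show ?thesis
    by (simp add: convex_cone_hull_contains_0)
next
  case False
  define w where "w = (1 / norm v) *\<^sub>R v"
  have "w \<in> sphere 0 1" and v: "v = norm v *\<^sub>R w"
    using False by (simp_all add: w_def)
  then have "Tmap R (outer w) \<in> convex_cone hull ((\<lambda>v. Tmap R (outer v)) ` sphere 0 1)"
    by (intro hull_inc imageI)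
  moreover have "Tmap R (outer v) = (norm v)\<^sup>2 *\<^sub>R Tmap R (outer w)"
    by (subst v) (simp add: outer_scaleR Tmap_scaleR)
  ultimately show ?thesis
    by (simp add: conic_convex_cone_hull conic_mul)
qed

lemma convex_cone_hull_Tmap_outer_subset:
  "convex_cone hull ((\<lambda>v. Tmap R (outer v)) ` sphere 0 1) \<subseteq> Tmap R ` {b. psd b}"
  by (rule hull_minimal) (auto simp: psd_outer convex_cone_linear_image convex_cone_psd linear_Tmap)

lemma hermitian_part_in_Aspace: "sym R \<Longrightarrow> M \<in> Aspace R \<Longrightarrow> hermitian_part M \<in> Aspace R"
  unfolding hermitian_part_def
  by (intro subspace_scale[OF subspace_Aspace] subspace_add[OF subspace_Aspace] adj_in_Aspace)

lemma psd_hermitian_part_Tmap: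
  assumes "\<And>v. 0 \<le> a \<bullet> Tmap R (outer v)"
  shows "psd (hermitian_part (Tmap R a))"
proof -
  have "Re (qform (hermitian_part (Tmap R a)) v) = a \<bullet> Tmap R (outer v)" for v
    by (simp add: Re_qform inner_hermitian_part adj_outer inner_Tmap)
  then show ?thesis
    using assms by (simp add: psd_iff_Re_qform adj_hermitian_part)
qed

lemma dual_nonneg_imp_Apos:
  assumes "tolerance R" "x \<in> Aspace R" "dual_nonneg (Aspace R) (restrict (phi x) (Aspace R))"
  shows "Apos R x"
proof -
  define C where "C = convex_cone hull ((\<lambda>v. Tmap R (outer v)) ` sphere 0 1)"
  have refl: "\<And>k. (k, k) \<in> R" and "sym R"
    using assms(1) by (auto simp: tolerance_def sym_def)
  have "x \<in> C"
  proof (rule ccontr)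
    assume "x \<notin> C"
    then obtain a where ax: "a \<bullet> x < 0" and aC: "\<And>c. c \<in> C \<Longrightarrow> 0 \<le> a \<bullet> c"
      using closed_convex_cone_separation closed_convex_cone_hull_Tmap_outer[OF refl]
        convex_cone_convex_cone_hull unfolding C_def by metis
    define h where "h = hermitian_part (Tmap R a)"
    have "h \<in> Aspace R"
      using hermitian_part_in_Aspace[OF \<open>sym R\<close>] by (simp add: h_def Aspace_def)
    moreover have "psd h"
      unfolding h_def
      by (rule psd_hermitian_part_Tmap) (use aC Tmap_outer_in_convex_cone_hull C_def in blast)
    ultimately have "0 \<le> x \<bullet> h"
      using assms(3) by (simp add: dual_nonneg_def flip: Re_phi)
    also have "x \<bullet> h = Tmap R a \<bullet> x"
      using dual_nonneg_imp_adj_eq[OF assms]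
      by (subst inner_commute) (simp add: h_def inner_hermitian_part)
    also have "\<dots> = a \<bullet> x"
      by (simp add: inner_Tmap[symmetric] Tmap_fixes_Aspace[OF assms(2)])
    finally show False
      using ax by simp
  qed
  then show ?thesis
    using convex_cone_hull_Tmap_outer_subset by (auto simp: C_def Apos_def)
qed

lemma Apos_iff_dual_nonneg:
  assumes "tolerance R" "x \<in> Aspace R"
  shows "Apos R x \<longleftrightarrow> dual_nonneg (Aspace R) (restrict (phi x) (Aspace R))"
proof
  assume "Apos R x"
  then obtain b where "psd b" "x = Tmap R b"
    by (auto simp: Apos_def)
  then have "0 \<le> phi x a" if "a \<in> Aspace R" "psd a" for a
    using that phi_psd_nonneg by (simp add: phi_Tmap_left Tmap_fixes_Aspace)
  then show "dual_nonneg (Aspace R) (restrict (phi x) (Aspace R))"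
    by (simp add: dual_nonneg_def complex_nonneg_iff)
qed (rule dual_nonneg_imp_Apos[OF assms])

theorem proposition4p5:
  fixes R :: "('n::finite \<times> 'n) set"
  assumes "tolerance R"
  defines "\<Phi> \<equiv> (\<lambda>x. restrict (phi x) (Aspace R))"
  shows "(\<forall>x\<in>Aspace R. \<forall>y\<in>Aspace R. (\<forall>a\<in>Aspace R. \<Phi> (x + y) a = \<Phi> x a + \<Phi> y a))
    \<and> (\<forall>r::real. \<forall>x\<in>Aspace R. (\<forall>a\<in>Aspace R. \<Phi> (r *\<^sub>R x) a = r *\<^sub>R \<Phi> x a))
    \<and> bij_betw \<Phi> (Aspace R) (dual_space (Aspace R))
    \<and> (\<forall>x\<in>Aspace R. Apos R x \<longleftrightarrow> dual_nonneg (Aspace R) (\<Phi> x))"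
  unfolding \<Phi>_def
  using bij_betw_phi_dual_space Apos_iff_dual_nonneg[OF assms(1)]
  by (simp add: phi_add_left phi_scaleR_left)

end
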